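(* Let $S^1\times S^2=\{(\theta,x)\in S^1\times D^3:|x|=1\}=\partial(S^1\times D^3)$, where $D^3$ is the closed unit ball, and let $i:S^1\times S^2\to S^1\times D^3$ be the inclusion. Then there exist contact forms $\lambda_A$ and $\lambda_B$ on $S^1\times S^2$ with $d\lambda_A=i^*\omega_A$ and $d\lambda_B=i^*\omega_B$.
   Context: Coordinates: $\theta\in\mathbb{R}/2\pi\mathbb{Z}$, $x=(x_1,x_2,x_3)\in D^3$. $\omega_A=x_1(d\theta\, dx_1+dx_2\, dx_3)+x_2(d\theta\, dx_2+dx_3\, dx_1)-2x_3(d\theta\, dx_3+dx_1\, dx_2)$ on $S^1\times D^3$. $\omega_B$ is the 2-form on the mapping torus $([0,2\pi]\times D^3)/\sim$ (diffeomorphic to $S^1\times D^3$, with boundary $S^1\times S^2$) obtained from the same expression $x_1(d\theta\, dx_1+dx_2\, dx_3)+x_2(d\theta\, dx_2+dx_3\, dx_1)-2x_3(d\theta\, dx_3+dx_1\, dx_2)$ on $[0,2\pi]\times D^3$ by gluing $\{2\pi\}\times D^3$ to $\{0\}\times D^3$ via $\phi(2\pi,x_1,x_2,x_3)=(0,x_1,-x_2,-x_3)$, which satisfies $\phi^*\omega=\omega$; for $\omega_B$, $S^1\times S^2$ denotes the boundary of this mapping torus. *)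

theory Defs
  imports "HOL-Analysis.Analysis"
begin

text \<open>Ambient coordinates: a point is a pair (theta, x) with theta real and x in R^3.
  S^1 x D^3 is covered by R x D^3 (theta modulo 2 pi).  Differential forms are
  represented on the ambient space R x R^3; a 1-form lambda = sum c_j dy_j is given by
  its coefficient field c, via lambda_p(u) = c p \<bullet> u.\<close>

fun Ck :: "nat \<Rightarrow> ('a::euclidean_space \<Rightarrow> real) \<Rightarrow> bool" where
  "Ck 0 f = continuous_on UNIV f"
| "Ck (Suc k) f = (f differentiable_on UNIV \<and>
      (\<forall>i\<in>Basis. Ck k (\<lambda>x. frechet_derivative f (at x) i)))"

definition smooth_fun :: "('a::euclidean_space \<Rightarrow> real) \<Rightarrow> bool" where
  "smooth_fun f = (\<forall>k. Ck k f)"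

definition smooth_field :: "('a::euclidean_space \<Rightarrow> 'b::euclidean_space) \<Rightarrow> bool" where
  "smooth_field c = (\<forall>b\<in>Basis. smooth_fun (\<lambda>p. c p \<bullet> b))"

type_synonym pt = "real \<times> (real^3)"

definition d_form :: "(pt \<Rightarrow> pt) \<Rightarrow> pt \<Rightarrow> pt \<Rightarrow> pt \<Rightarrow> real" where
  "d_form c p u v = frechet_derivative c (at p) u \<bullet> v - frechet_derivative c (at p) v \<bullet> u"

text \<open>The 2-form
  x1(d\<theta> dx1+dx2 dx3)+x2(d\<theta> dx2+dx3 dx1)-2x3(d\<theta> dx3+dx1 dx2),
  with (\<alpha>\<and>\<beta>)(u,v) = \<alpha>(u)\<beta>(v) - \<alpha>(v)\<beta>(u).\<close>
definition omega :: "pt \<Rightarrow> pt \<Rightarrow> pt \<Rightarrow> real" where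
  "omega p u v = (let x = snd p; a = fst u; U = snd u; b = fst v; V = snd v in
      x$1 * ((a * V$1 - b * U$1) + (U$2 * V$3 - U$3 * V$2))
    + x$2 * ((a * V$2 - b * U$2) + (U$3 * V$1 - U$1 * V$3))
    - 2 * x$3 * ((a * V$3 - b * U$3) + (U$1 * V$2 - U$2 * V$1)))"

definition bdry_pt :: "pt \<Rightarrow> bool" where
  "bdry_pt p \<longleftrightarrow> norm (snd p) = 1"

definition tangent :: "pt \<Rightarrow> pt \<Rightarrow> bool" where
  "tangent p u \<longleftrightarrow> snd u \<bullet> snd p = 0"

text \<open>d(i^* lambda) = i^* omega on S^1 x S^2.\<close>
definition primitive_on_bdry :: "(pt \<Rightarrow> pt) \<Rightarrow> (pt \<Rightarrow> pt \<Rightarrow> pt \<Rightarrow> real) \<Rightarrow> bool" where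
  "primitive_on_bdry c w \<longleftrightarrow> (\<forall>p u v. bdry_pt p \<longrightarrow> tangent p u \<longrightarrow> tangent p v \<longrightarrow>
       d_form c p u v = w p u v)"

text \<open>Contact condition: i^* lambda \<and> d(i^* lambda) is nowhere zero on S^1 x S^2.\<close>
definition contact_on_bdry :: "(pt \<Rightarrow> pt) \<Rightarrow> bool" where
  "contact_on_bdry c \<longleftrightarrow> (\<forall>p. bdry_pt p \<longrightarrow> (\<exists>u v w. tangent p u \<and> tangent p v \<and> tangent p w \<and>
       (c p \<bullet> u) * d_form c p v w + (c p \<bullet> v) * d_form c p w u
       + (c p \<bullet> w) * d_form c p u v \<noteq> 0))"

text \<open>Forms on S^1 x D^3: invariant under theta \<mapsto> theta + 2 pi.\<close>
definition periodic_A :: "(pt \<Rightarrow> pt) \<Rightarrow> bool" where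
  "periodic_A c \<longleftrightarrow> (\<forall>t x. c (t + 2 * pi, x) = c (t, x))"

text \<open>Mapping torus: deck transformation T(theta,x) = (theta - 2 pi, phi x),
  phi(x1,x2,x3) = (x1,-x2,-x3); forms on the mapping torus are T-invariant forms.\<close>
definition phi3 :: "real^3 \<Rightarrow> real^3" where
  "phi3 x = vector [x$1, - x$2, - x$3]"

definition deckB :: "pt \<Rightarrow> pt" where
  "deckB p = (fst p - 2 * pi, phi3 (snd p))"

definition invariant_B :: "(pt \<Rightarrow> pt) \<Rightarrow> bool" where
  "invariant_B c \<longleftrightarrow> (\<forall>p u. c (deckB p) \<bullet> (fst u, phi3 (snd u)) = c p \<bullet> u)"

end

theory Submission
  imports Defs
begin

(* The 2-form omega is exact on all of R x R^3, with the explicit primitive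
     lambda = (2 x3^2 - x1^2 - x2^2)/2 d\<theta> + x3 (x2 dx1 - x1 dx2),
   whose coefficients are polynomials in x alone and are unchanged by
   (x1, x2, x3) \<mapsto> (x1, -x2, -x3).  Hence the one form lambda descends both to
   S^1 x D^3 and to the mapping torus, and serves as lambda_A and lambda_B.
   On the boundary, for a tangent vector V = x \<times> e of the sphere, the 3-form
   lambda \<and> d lambda evaluated on (\<partial>\<theta>, V, x \<times> V) equals -|V|^2 N(x)/2 with
   N(x) = (x1^2 + x2^2 - 2 x3^2)^2 + 6 x3^2 (x1^2 + x2^2), which is positive for
   x \<noteq> 0; some coordinate axis e makes V nonzero. *)

unbundle cross3_syntax

lemma real_polynomial_function_has_derivative:
  fixes f :: "'a::real_normed_vector \<Rightarrow> real"
  assumes "real_polynomial_function f"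
  shows "\<exists>f'. (\<forall>x. (f has_derivative f' x) (at x)) \<and> (\<forall>u. real_polynomial_function (\<lambda>x. f' x u))"
  using assms
proof (induction f rule: real_polynomial_function.induct)
  case (linear f)
  then show ?case
    by (intro exI[of _ "\<lambda>x. f"]) (auto intro: bounded_linear_imp_has_derivative)
next
  case (const c)
  then show ?case
    by (intro exI[of _ "\<lambda>x u. 0"]) auto
next
  case (add f g)
  then obtain f' g' where "\<forall>x. (f has_derivative f' x) (at x)" "\<forall>x. (g has_derivative g' x) (at x)"
    "\<forall>u. real_polynomial_function (\<lambda>x. f' x u)" "\<forall>u. real_polynomial_function (\<lambda>x. g' x u)"
    by blast
  then show ?case
    by (intro exI[of _ "\<lambda>x u. f' x u + g' x u"]) (auto intro: has_derivative_add)
next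
  case (mult f g)
  then obtain f' g' where "\<forall>x. (f has_derivative f' x) (at x)" "\<forall>x. (g has_derivative g' x) (at x)"
    "\<forall>u. real_polynomial_function (\<lambda>x. f' x u)" "\<forall>u. real_polynomial_function (\<lambda>x. g' x u)"
    by blast
  with mult.hyps show ?case
    by (intro exI[of _ "\<lambda>x u. f x * g' x u + f' x u * g x"])
       (simp add: has_derivative_mult real_polynomial_function.intros(3,4))
qed

lemma real_polynomial_function_frechet_derivative:
  fixes f :: "'a::real_normed_vector \<Rightarrow> real"
  assumes "real_polynomial_function f"
  shows "real_polynomial_function (\<lambda>x. frechet_derivative f (at x) u)"
proof -
  obtain f' where f': "\<And>x. (f has_derivative f' x) (at x)" "real_polynomial_function (\<lambda>x. f' x u)"
    using real_polynomial_function_has_derivative[OF assms] by blast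
  have "frechet_derivative f (at x) = f' x" for x
    using frechet_derivative_at[OF f'(1)] by simp
  with f'(2) show ?thesis
    by simp
qed

lemma real_polynomial_function_Ck:
  fixes f :: "'a::euclidean_space \<Rightarrow> real"
  shows "real_polynomial_function f \<Longrightarrow> Ck k f"
proof (induction k arbitrary: f)
  case 0
  then show ?case
    by (simp add: continuous_on_polymonial_function real_polynomial_function_eq)
next
  case (Suc k)
  then show ?case
    by (simp add: differentiable_on_real_polynomial_function real_polynomial_function_frechet_derivative)
qed

lemma smooth_field_polynomial_function:
  fixes c :: "'a::euclidean_space \<Rightarrow> 'b::euclidean_space"
  assumes "polynomial_function c"
  shows "smooth_field c"
  using assms
  by (simp add: smooth_field_def smooth_fun_def polynomial_function_iff_Basis_inner real_polynomial_function_Ck)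

lemma has_derivative_vector3:
  assumes "(f1 has_derivative f1') F" "(f2 has_derivative f2') F" "(f3 has_derivative f3') F"
  shows "((\<lambda>x. vector [f1 x, f2 x, f3 x] :: real^3) has_derivative (\<lambda>h. vector [f1' h, f2' h, f3' h])) F"
proof -
  have vector3_eq: "vector [a, b, c] = a *\<^sub>R axis 1 1 + b *\<^sub>R axis 2 1 + c *\<^sub>R (axis 3 1 :: real^3)" for a b c
    by (simp add: vec_eq_iff forall_3 axis_def)
  show ?thesis
    unfolding vector3_eq by (intro derivative_intros assms)
qed

definition omega_primitive :: "pt \<Rightarrow> pt" where
  "omega_primitive p = (let x = snd p in
     ((2 * x$3^2 - x$1^2 - x$2^2) / 2, vector [x$2 * x$3, - x$1 * x$3, 0]))"

lemma inner_omega_primitive: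
  "omega_primitive p \<bullet> u =
     (2 * snd p$3^2 - snd p$1^2 - snd p$2^2) / 2 * fst u
     + snd p$2 * snd p$3 * snd u$1 - snd p$1 * snd p$3 * snd u$2"
  by (simp add: omega_primitive_def Let_def inner_prod_def inner_vec_def sum_3)

lemma polynomial_function_omega_primitive: "polynomial_function omega_primitive"
proof -
  have coordinate: "real_polynomial_function (\<lambda>p::pt. snd p $ i)" for i
    using bounded_linear_compose[OF bounded_linear_vec_nth bounded_linear_snd]
    by (auto simp: o_def)
  show ?thesis
    unfolding polynomial_function_iff_Basis_inner inner_omega_primitive
    by (simp add: coordinate real_polynomial_function_diff real_polynomial_function_divide
        real_polynomial_function_power real_polynomial_function.intros(2-4))
qed

lemma omega_primitive_has_derivative:
  "(omega_primitive has_derivative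
     (\<lambda>u. (2 * snd p$3 * snd u$3 - snd p$1 * snd u$1 - snd p$2 * snd u$2,
           vector [snd u$2 * snd p$3 + snd p$2 * snd u$3, - (snd u$1 * snd p$3 + snd p$1 * snd u$3), 0])))
   (at p)"
proof -
  have coordinate: "((\<lambda>p::pt. snd p $ i) has_derivative (\<lambda>u. snd u $ i)) (at p)" for i
    using bounded_linear_compose[OF bounded_linear_vec_nth bounded_linear_snd]
    by (auto simp: o_def intro: bounded_linear_imp_has_derivative)
  show ?thesis
    unfolding omega_primitive_def Let_def
    by (rule derivative_eq_intros has_derivative_vector3 coordinate refl ext | simp add: field_simps)+
qed

lemma d_form_omega_primitive: "d_form omega_primitive p u v = omega p u v"
  unfolding d_form_def frechet_derivative_at[OF omega_primitive_has_derivative, symmetric] omega_def Let_def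
  by (simp add: inner_prod_def inner_vec_def sum_3 algebra_simps)

lemma periodic_A_omega_primitive: "periodic_A omega_primitive"
  by (simp add: periodic_A_def omega_primitive_def)

lemma invariant_B_omega_primitive: "invariant_B omega_primitive"
  by (simp add: invariant_B_def inner_omega_primitive deckB_def phi3_def)

definition contact_density :: "real^3 \<Rightarrow> real" where
  "contact_density x = (x$1^2 + x$2^2 - 2 * x$3^2)^2 + 6 * x$3^2 * (x$1^2 + x$2^2)"

lemma contact_density_pos:
  assumes "x \<noteq> 0"
  shows "0 < contact_density x"
proof (rule ccontr)
  assume "\<not> 0 < contact_density x"
  moreover have "0 \<le> (x$1^2 + x$2^2 - 2 * x$3^2)^2" and "0 \<le> x$3^2 * (x$1^2 + x$2^2)"
    by simp_all
  ultimately have "(x$1^2 + x$2^2 - 2 * x$3^2)^2 = 0" and "x$3^2 * (x$1^2 + x$2^2) = 0"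
    unfolding contact_density_def by linarith+
  then have "x$1^2 + x$2^2 = 2 * x$3^2" and "x$3 = 0 \<or> x$1^2 + x$2^2 = 0"
    by simp_all
  then have "x$1 = 0 \<and> x$2 = 0 \<and> x$3 = 0"
    by (auto simp: sum_power2_eq_zero_iff)
  with assms show False
    by (simp add: vec_eq_iff forall_3)
qed

lemma omega_primitive_wedge_omega_cross:
  fixes x e :: "real^3"
  defines "V \<equiv> x \<times> e"
  shows "(omega_primitive (t, x) \<bullet> (1, 0)) * omega (t, x) (0, V) (0, x \<times> V)
       + (omega_primitive (t, x) \<bullet> (0, V)) * omega (t, x) (0, x \<times> V) (1, 0)
       + (omega_primitive (t, x) \<bullet> (0, x \<times> V)) * omega (t, x) (1, 0) (0, V)
       = - (V \<bullet> V) * contact_density x / 2"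
  unfolding V_def inner_omega_primitive omega_def contact_density_def Let_def
  by (simp add: cross_components inner_vec_def sum_3 field_simps power2_eq_square)

lemma contact_on_bdry_omega_primitive: "contact_on_bdry omega_primitive"
  unfolding contact_on_bdry_def d_form_omega_primitive
proof (intro allI impI)
  fix p :: pt
  assume "bdry_pt p"
  obtain t x where p: "p = (t, x)"
    by fastforce
  with \<open>bdry_pt p\<close> have "x \<noteq> 0"
    by (auto simp: bdry_pt_def)
  then obtain e where "x \<times> e \<noteq> 0"
    using cross_basis_nonzero by blast
  define V where "V = x \<times> e"
  have tangent: "tangent p (1, 0)" "tangent p (0, V)" "tangent p (0, x \<times> V)"
    by (simp_all add: tangent_def p V_def dot_cross_self inner_commute)
  have "0 < V \<bullet> V"
    using \<open>x \<times> e \<noteq> 0\<close> by (simp add: V_def)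
  with contact_density_pos[OF \<open>x \<noteq> 0\<close>]
  have "(omega_primitive p \<bullet> (1, 0)) * omega p (0, V) (0, x \<times> V)
       + (omega_primitive p \<bullet> (0, V)) * omega p (0, x \<times> V) (1, 0)
       + (omega_primitive p \<bullet> (0, x \<times> V)) * omega p (1, 0) (0, V) \<noteq> 0"
    unfolding p V_def omega_primitive_wedge_omega_cross by simp
  with tangent show "\<exists>u v w. tangent p u \<and> tangent p v \<and> tangent p w \<and>
      (omega_primitive p \<bullet> u) * omega p v w + (omega_primitive p \<bullet> v) * omega p w u
      + (omega_primitive p \<bullet> w) * omega p u v \<noteq> 0"
    by blast
qed

theorem mainTheorem7:
  shows "(\<exists>cA. smooth_field cA \<and> periodic_A cA \<and> contact_on_bdry cA \<and> primitive_on_bdry cA omega)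
       \<and> (\<exists>cB. smooth_field cB \<and> invariant_B cB \<and> contact_on_bdry cB \<and> primitive_on_bdry cB omega)"
proof -
  have "smooth_field omega_primitive"
    by (rule smooth_field_polynomial_function[OF polynomial_function_omega_primitive])
  moreover have "primitive_on_bdry omega_primitive omega"
    by (simp add: primitive_on_bdry_def d_form_omega_primitive)
  ultimately show ?thesis
    using periodic_A_omega_primitive invariant_B_omega_primitive contact_on_bdry_omega_primitive
    by blast
qed

end
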